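(* Let $p$ be a prime, let $f:\mathbb{F}_{p^n}\to\mathbb{F}_p$ be $s_1$-plateaued and $g:\mathbb{F}_{p^m}\to\mathbb{F}_p$ be $s_2$-plateaued. Let $M=(m_{x,y})_{x,y\in\mathbb{F}_{p^n}}$ with $m_{x,y}=\zeta_p^{f(x+y)}$ and $N=(n_{a,b})_{a,b\in\mathbb{F}_{p^m}}$ with $n_{a,b}=\zeta_p^{g(a+b)}$, and let $P=M\otimes N$ be their Kronecker product. Then $PP^*P=p^{n+m+s_1+s_2}P$, where $P^*$ is the conjugate transpose.
   Context: $\zeta_p=e^{2\pi i/p}$, $Tr_n(z)=\sum_{i=0}^{n-1}z^{p^i}$. The Walsh transform of $f:\mathbb{F}_{p^n}\to\mathbb{F}_p$ is $\widehat f(\mu)=\sum_{x}\zeta_p^{f(x)-Tr_n(\mu x)}$; $f$ is $s$-plateaued if $|\widehat f(\mu)|\in\{0,p^{(n+s)/2}\}$ for all $\mu$ (analogously for $g$ on $\mathbb{F}_{p^m}$). *)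

theory Defs
  imports "HOL-Analysis.Analysis"
begin

definition prime_subfield :: "'a::field set" where
  "prime_subfield = range of_nat"

definition fp_lift :: "nat \<Rightarrow> 'a::field \<Rightarrow> nat" where
  "fp_lift p z = (THE k. k < p \<and> of_nat k = z)"

definition zeta :: "nat \<Rightarrow> complex" where
  "zeta p = cis (2 * pi / real p)"

definition zeta_pow :: "nat \<Rightarrow> 'a::field \<Rightarrow> complex" where
  "zeta_pow p z = zeta p ^ fp_lift p z"

definition tr :: "nat \<Rightarrow> nat \<Rightarrow> 'a::field \<Rightarrow> 'a" where
  "tr p n z = (\<Sum>i<n. z ^ (p ^ i))"

definition walsh :: "nat \<Rightarrow> nat \<Rightarrow> ('a::{field,finite} \<Rightarrow> 'a) \<Rightarrow> 'a \<Rightarrow> complex" where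
  "walsh p n f \<mu> = (\<Sum>x\<in>UNIV. zeta_pow p (f x - tr p n (\<mu> * x)))"

definition plateaued :: "nat \<Rightarrow> nat \<Rightarrow> nat \<Rightarrow> ('a::{field,finite} \<Rightarrow> 'a) \<Rightarrow> bool" where
  "plateaued p n s f \<longleftrightarrow>
     (\<forall>\<mu>. cmod (walsh p n f \<mu>) \<in> {0, real p powr ((real n + real s) / 2)})"

definition kron :: "complex^'a^'a \<Rightarrow> complex^'b^'b \<Rightarrow> complex^('a \<times> 'b)^('a \<times> 'b)" where
  "kron M N = (\<chi> i j. M $ fst i $ fst j * N $ snd i $ snd j)"

definition conj_transpose :: "complex^'n^'m \<Rightarrow> complex^'m^'n" where
  "conj_transpose A = (\<chi> i j. cnj (A $ j $ i))"

end

theory Submission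
  imports Defs "HOL-Computational_Algebra.Polynomial" "HOL-Number_Theory.Cong"
begin

text \<open>
  Write \<open>F x = \<zeta>\<^sub>p\<^bsup>f(x)\<^esup>\<close> and \<open>M = (F (x + y))\<close>. The \<open>(x, w)\<close> entry of \<open>M M\<^sup>* M\<close>
  depends only on \<open>x + w\<close>: it is a convolution \<open>G (x + w)\<close> of \<open>F\<close> with its conjugate reflection
  and with \<open>F\<close> again, so the additive Fourier transform of \<open>G\<close> is \<open>|W|\<^sup>2 W\<close>, where \<open>W\<close> is the
  Walsh transform of \<open>f\<close>. Plateauedness says \<open>|W|\<^sup>2 = p\<^bsup>n+s\<^esup>\<close> wherever \<open>W \<noteq> 0\<close>, hence
  \<open>|W|\<^sup>2 W = p\<^bsup>n+s\<^esup> W\<close>, and Fourier inversion gives \<open>G = p\<^bsup>n+s\<^esup> F\<close>, i.e.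
  \<open>M M\<^sup>* M = p\<^bsup>n+s\<^esup> M\<close>. The identity for \<open>P = M \<otimes> N\<close> follows because
  \<open>(M \<otimes> N)(M \<otimes> N)\<^sup>*(M \<otimes> N) = M M\<^sup>* M \<otimes> N N\<^sup>* N\<close>.
\<close>

lemma zeta_power: "zeta p ^ k = cis (2 * pi * real k / real p)"
proof -
  have "zeta p ^ k = cis (real k * (2 * pi / real p))"
    by (simp only: zeta_def Complex.DeMoivre)
  then show ?thesis
    by (simp add: mult.commute)
qed

lemma zeta_power_self: "p > 0 \<Longrightarrow> zeta p ^ p = 1"
  by (simp add: zeta_power)

lemma zeta_power_mod: "p > 0 \<Longrightarrow> zeta p ^ (k mod p) = zeta p ^ k"
  by (metis div_mult_mod_eq mult.commute power_add power_mult power_one zeta_power_self mult_1)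

lemma zeta_power_eq_1_iff:
  assumes "p > 0"
  shows "zeta p ^ k = 1 \<longleftrightarrow> p dvd k"
proof
  assume "zeta p ^ k = 1"
  then have "cos (2 * pi * real k / real p) = 1"
    by (metis Re_complex_of_real cis.sel(1) zeta_power of_real_1)
  then obtain j :: int where "2 * pi * real k / real p = of_int j * 2 * pi"
    using cos_one_2pi_int by blast
  then have "int k = j * int p"
    using assms by (simp add: field_simps) (metis of_int_eq_iff of_int_mult of_int_of_nat_eq)
  then show "p dvd k"
    by (metis dvd_triv_right int_dvd_int_iff)
next
  assume "p dvd k"
  then show "zeta p ^ k = 1"
    using assms by (auto simp: power_mult zeta_power_self)
qed

lemma norm_zeta_power [simp]: "norm (zeta p ^ k) = 1"
  by (simp add: zeta_power)

lemma cnj_mult_self_eq_1: "norm (z :: complex) = 1 \<Longrightarrow> cnj z * z = 1"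
  by (metis complex_norm_square mult.commute of_real_1 power_one)

context
  fixes p :: nat
  assumes prime_p: "prime p" and CHAR_p: "CHAR('a::field) = p"
begin

lemma of_nat_eq_of_nat_iff_mod: "(of_nat a :: 'a) = of_nat b \<longleftrightarrow> a mod p = b mod p"
  using of_nat_eq_iff_cong_CHAR[where 'a='a] CHAR_p by (simp add: cong_def)

lemma fp_lift_of_nat: "fp_lift p (of_nat k :: 'a) = k mod p"
  unfolding fp_lift_def
proof (rule the_equality)
  show "k mod p < p \<and> (of_nat (k mod p) :: 'a) = of_nat k"
    using prime_gt_0_nat[OF prime_p] by (simp add: of_nat_eq_of_nat_iff_mod)
next
  fix j assume "j < p \<and> (of_nat j :: 'a) = of_nat k"
  then show "j = k mod p"
    using of_nat_eq_of_nat_iff_mod[of j k] by auto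
qed

lemma zeta_pow_of_nat: "zeta_pow p (of_nat k :: 'a) = zeta p ^ k"
  unfolding zeta_pow_def fp_lift_of_nat using zeta_power_mod prime_gt_0_nat[OF prime_p] by simp

lemma zeta_pow_zero: "zeta_pow p (0 :: 'a) = 1"
  using zeta_pow_of_nat[of 0] by simp

lemma zeta_pow_add:
  "a \<in> prime_subfield \<Longrightarrow> b \<in> prime_subfield \<Longrightarrow> zeta_pow p (a + b :: 'a) = zeta_pow p a * zeta_pow p b"
  unfolding prime_subfield_def by (auto simp: zeta_pow_of_nat power_add simp flip: of_nat_add)

lemma norm_zeta_pow: "a \<in> prime_subfield \<Longrightarrow> norm (zeta_pow p (a :: 'a)) = 1"
  unfolding prime_subfield_def by (auto simp: zeta_pow_of_nat)

lemma prime_subfield_diff: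
  assumes "a \<in> prime_subfield" "b \<in> prime_subfield"
  shows "(a - b :: 'a) \<in> prime_subfield"
proof -
  obtain i j where ij: "a = of_nat i" "b = of_nat j"
    using assms unfolding prime_subfield_def by auto
  have "j mod p \<le> p"
    using prime_gt_0_nat[OF prime_p] by (simp add: less_imp_le)
  moreover have "(of_nat (j mod p) :: 'a) = of_nat j"
    using prime_gt_0_nat[OF prime_p] by (simp add: of_nat_eq_of_nat_iff_mod)
  moreover have "(of_nat p :: 'a) = 0"
    using CHAR_p of_nat_CHAR by blast
  ultimately have "a - b = of_nat (i + (p - j mod p))"
    by (simp add: ij of_nat_diff)
  then show ?thesis
    unfolding prime_subfield_def by blast
qed

lemma zeta_pow_diff:
  assumes a: "a \<in> prime_subfield" and b: "b \<in> prime_subfield"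
  shows "zeta_pow p (a - b :: 'a) = zeta_pow p a * cnj (zeta_pow p b)"
proof -
  have "zeta_pow p a * cnj (zeta_pow p b) = zeta_pow p (a - b) * (cnj (zeta_pow p b) * zeta_pow p b)"
    using zeta_pow_add[OF prime_subfield_diff[OF a b] b] by (simp add: mult_ac)
  then show ?thesis
    using cnj_mult_self_eq_1[OF norm_zeta_pow[OF b]] by simp
qed

lemma zeta_pow_neq_1:
  assumes "a \<in> prime_subfield" and "a \<noteq> 0"
  shows "zeta_pow p (a :: 'a) \<noteq> 1"
proof -
  obtain i where i: "a = of_nat i"
    using assms(1) unfolding prime_subfield_def by auto
  then have "\<not> p dvd i"
    using assms(2) CHAR_p of_nat_eq_0_iff_char_dvd by blast
  then show ?thesis
    unfolding i zeta_pow_of_nat using zeta_power_eq_1_iff prime_gt_0_nat[OF prime_p] by blast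
qed

end

subsection \<open>Finite fields\<close>

lemma sum_UNIV_shift: "(\<Sum>x\<in>(UNIV :: 'a::{ab_group_add,finite} set). h (x + c)) = (\<Sum>x\<in>UNIV. h x)"
  by (rule sum.reindex_bij_witness[of _ "\<lambda>x. x - c" "\<lambda>x. x + c"]) auto

lemma of_nat_CARD_eq_0: "of_nat CARD('a::{ring_1,finite}) = (0 :: 'a)"
proof -
  have "(\<Sum>x\<in>(UNIV :: 'a set). x + 1) = (\<Sum>x\<in>UNIV. x)"
    by (rule sum_UNIV_shift)
  then show ?thesis
    by (simp add: sum.distrib)
qed

text \<open>Multiplication by \<open>x \<noteq> 0\<close> permutes the nonzero elements, so comparing products gives \<open>x\<^bsup>q-1\<^esup> = 1\<close>.\<close>
lemma power_CARD_eq: "(x :: 'a::{field,finite}) ^ CARD('a) = x"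
proof (cases "x = 0")
  case False
  have CARD_pos: "CARD('a) > 0"
    by simp
  have "(\<Prod>y\<in>UNIV - {0}. x * y) = (\<Prod>y\<in>UNIV - {0}. y :: 'a)"
    by (rule prod.reindex_bij_witness[of _ "\<lambda>y. y / x" "\<lambda>y. x * y"]) (use False in auto)
  moreover have "(\<Prod>y\<in>UNIV - {0}. x * y) = x ^ (CARD('a) - 1) * (\<Prod>y\<in>UNIV - {0}. y)"
    by (simp add: prod.distrib)
  ultimately have "x ^ (CARD('a) - 1) = 1"
    by simp
  then show ?thesis
    using CARD_pos by (metis Suc_diff_1 mult.right_neutral power_Suc)
qed simp

definition chi :: "nat \<Rightarrow> nat \<Rightarrow> 'a::field \<Rightarrow> 'a \<Rightarrow> complex" where
  "chi p n \<mu> x = zeta_pow p (tr p n (\<mu> * x))"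

definition fourier :: "nat \<Rightarrow> nat \<Rightarrow> ('a::{field,finite} \<Rightarrow> complex) \<Rightarrow> 'a \<Rightarrow> complex" where
  "fourier p n F \<mu> = (\<Sum>x\<in>UNIV. F x * cnj (chi p n \<mu> x))"

context
  fixes p n :: nat
  assumes prime_p: "prime p" and CARD_a: "CARD('a::{field,finite}) = p ^ n"
begin

lemma CHAR_eq: "CHAR('a) = p"
proof -
  have prime_CHAR: "prime CHAR('a)"
    by (rule prime_CHAR_semidom[OF finite_imp_CHAR_pos]) simp
  have "CHAR('a) dvd p ^ n"
    using of_nat_CARD_eq_0[where 'a='a] CARD_a by (metis of_nat_eq_0_iff_char_dvd)
  then show ?thesis
    using prime_CHAR prime_p prime_dvd_power primes_dvd_imp_eq by blast
qed

lemma degree_pos: "n > 0"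
proof (rule ccontr)
  assume "\<not> n > 0"
  then have "CARD('a) = 1"
    using CARD_a by simp
  moreover have "card {0::'a, 1} \<le> CARD('a)"
    by (rule card_mono) auto
  ultimately show False
    by simp
qed

lemma power_prime_power_add: "((x :: 'a) + y) ^ (p ^ i) = x ^ (p ^ i) + y ^ (p ^ i)"
  by (rule freshmans_dream') (simp_all add: CHAR_eq prime_p)

lemma tr_add: "tr p n ((x :: 'a) + y) = tr p n x + tr p n y"
  unfolding tr_def power_prime_power_add by (simp add: sum.distrib)

lemma tr_zero: "tr p n (0 :: 'a) = 0"
  using prime_gt_0_nat[OF prime_p] by (simp add: tr_def power_0_left)

lemma tr_power_p: "tr p n (z :: 'a) ^ p = tr p n z"
proof -
  have "tr p n z ^ p = (\<Sum>i<n. z ^ (p ^ Suc i))"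
    unfolding tr_def
    by (subst freshmans_dream_sum) (simp_all only: CHAR_eq prime_p power_Suc2 power_mult)
  also have "\<dots> = (\<Sum>i<Suc n. z ^ (p ^ i)) - z"
    by (subst sum.lessThan_Suc_shift) simp
  also have "\<dots> = tr p n z"
    using power_CARD_eq[of z] by (simp add: tr_def CARD_a)
  finally show ?thesis .
qed

lemma of_nat_power_p: "(of_nat k :: 'a) ^ p = of_nat k"
proof (induction k)
  case 0
  then show ?case
    using prime_gt_0_nat[OF prime_p] by simp
next
  case (Suc k)
  have "(of_nat k + 1 :: 'a) ^ p = of_nat k ^ p + 1 ^ p"
    by (rule freshmans_dream) (simp_all add: CHAR_eq prime_p)
  then show ?case
    using Suc by (simp add: add.commute)
qed

text \<open>The \<open>p\<close> elements \<open>0, \<dots>, p - 1\<close> already exhaust the roots of \<open>X\<^sup>p - X\<close>.\<close>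
lemma power_p_eq_self_imp_prime_subfield:
  assumes "(y :: 'a) ^ p = y"
  shows "y \<in> prime_subfield"
proof -
  define Q :: "'a poly" where "Q = monom 1 p - [:0, 1:]"
  have p_ge_2: "p \<ge> 2"
    using prime_ge_2_nat[OF prime_p] .
  have poly_Q: "poly Q x = x ^ p - x" for x
    unfolding Q_def by (simp add: poly_monom)
  have "coeff Q p = 1"
    using p_ge_2 by (simp add: Q_def coeff_pCons split: nat.split)
  then have "Q \<noteq> 0"
    by auto
  moreover have "degree Q \<le> p"
    unfolding Q_def using p_ge_2 by (intro degree_diff_le) (simp_all add: degree_monom_eq)
  ultimately have card_roots: "card {x. poly Q x = 0} \<le> p"
    using card_poly_roots_bound le_trans by blast
  have roots: "of_nat ` {..<p} \<subseteq> {x :: 'a. poly Q x = 0}"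
    using of_nat_power_p by (auto simp: poly_Q)
  have "inj_on (of_nat :: nat \<Rightarrow> 'a) {..<p}"
    by (rule inj_onI) (simp add: of_nat_eq_of_nat_iff_mod[OF prime_p CHAR_eq])
  then have "card (of_nat ` {..<p} :: 'a set) = p"
    by (simp add: card_image)
  then have "of_nat ` {..<p} = {x :: 'a. poly Q x = 0}"
    using card_roots roots card_mono[OF _ roots] by (intro card_subset_eq) auto
  moreover have "y \<in> {x :: 'a. poly Q x = 0}"
    using assms by (simp add: poly_Q)
  ultimately show ?thesis
    unfolding prime_subfield_def by auto
qed

lemma tr_in_prime_subfield: "tr p n (z :: 'a) \<in> prime_subfield"
  using power_p_eq_self_imp_prime_subfield tr_power_p by blast

text \<open>\<open>Tr\<^sub>n\<close> is a polynomial of degree \<open>p\<^bsup>n-1\<^esup> < p\<^sup>n\<close>, so it cannot vanish on the whole field.\<close>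
lemma tr_not_identically_zero: "\<exists>y :: 'a. tr p n y \<noteq> 0"
proof (rule ccontr)
  assume "\<nexists>y :: 'a. tr p n y \<noteq> 0"
  then have tr_0: "tr p n (y :: 'a) = 0" for y
    by blast
  define Q :: "'a poly" where "Q = (\<Sum>i<n. monom 1 (p ^ i))"
  have p_ge_2: "p \<ge> 2"
    using prime_ge_2_nat[OF prime_p] .
  have "coeff Q (p ^ (n - 1)) = (\<Sum>i<n. if i = n - 1 then 1 else 0)"
    using p_ge_2 by (simp add: Q_def coeff_sum coeff_monom power_inject_exp eq_commute)
  then have "coeff Q (p ^ (n - 1)) = 1"
    using degree_pos by simp
  then have "Q \<noteq> 0"
    by auto
  moreover have "degree Q \<le> p ^ (n - 1)"
    unfolding Q_def
  proof (rule degree_sum_le)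
    fix i assume "i \<in> {..<n}"
    then show "degree (monom (1 :: 'a) (p ^ i)) \<le> p ^ (n - 1)"
      using p_ge_2 by (simp add: degree_monom_eq power_increasing)
  qed simp
  ultimately have "card {x. poly Q x = 0} \<le> p ^ (n - 1)"
    using card_poly_roots_bound by fastforce
  moreover have "{x. poly Q x = 0} = (UNIV :: 'a set)"
    using tr_0 by (auto simp: Q_def tr_def poly_sum poly_monom)
  moreover have "p ^ (n - 1) < p ^ n"
    using p_ge_2 degree_pos by (intro power_strict_increasing) auto
  ultimately show False
    using CARD_a by simp
qed

subsection \<open>Additive characters and Fourier inversion\<close>

lemma chi_add: "chi p n \<mu> ((x :: 'a) + y) = chi p n \<mu> x * chi p n \<mu> y"
  unfolding chi_def distrib_left tr_add
  by (rule zeta_pow_add[OF prime_p CHAR_eq tr_in_prime_subfield tr_in_prime_subfield])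

lemma chi_diff: "chi p n \<mu> ((x :: 'a) - y) = chi p n \<mu> x * cnj (chi p n \<mu> y)"
proof -
  have "tr p n (\<mu> * (x - y)) = tr p n (\<mu> * x) - tr p n (\<mu> * y)"
    using tr_add[of "\<mu> * (x - y)" "\<mu> * y"] by (simp add: algebra_simps)
  then show ?thesis
    unfolding chi_def
    using zeta_pow_diff[OF prime_p CHAR_eq tr_in_prime_subfield tr_in_prime_subfield] by simp
qed

lemma chi_commute: "chi p n \<mu> (x :: 'a) = chi p n x \<mu>"
  unfolding chi_def by (simp add: mult.commute)

lemma chi_zero: "chi p n 0 (x :: 'a) = 1"
  unfolding chi_def using tr_zero zeta_pow_zero[OF prime_p CHAR_eq] by simp

text \<open>For \<open>\<mu> \<noteq> 0\<close> pick \<open>c\<close> with \<open>\<chi>\<^sub>\<mu>(c) \<noteq> 1\<close>; translating by \<open>c\<close> multiplies the sum by \<open>\<chi>\<^sub>\<mu>(c)\<close>.\<close>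
lemma sum_chi: "(\<Sum>x\<in>UNIV. chi p n \<mu> (x :: 'a)) = (if \<mu> = 0 then of_nat (p ^ n) else 0)"
proof (cases "\<mu> = 0")
  case True
  then show ?thesis
    using CARD_a by (simp add: chi_zero)
next
  case False
  obtain y :: 'a where y: "tr p n y \<noteq> 0"
    using tr_not_identically_zero by blast
  define c where "c = y / \<mu>"
  have "chi p n \<mu> c \<noteq> 1"
    unfolding chi_def c_def using False
    by (simp add: zeta_pow_neq_1[OF prime_p CHAR_eq tr_in_prime_subfield y])
  moreover have "(\<Sum>x\<in>UNIV. chi p n \<mu> x) = chi p n \<mu> c * (\<Sum>x\<in>UNIV. chi p n \<mu> (x :: 'a))"
    using sum_UNIV_shift[of "chi p n \<mu>" c] by (simp add: chi_add sum_distrib_left mult.commute)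
  ultimately show ?thesis
    using False by (metis mult_cancel_right2)
qed

lemma fourier_inversion:
  "(\<Sum>\<mu>\<in>UNIV. fourier p n h \<mu> * chi p n \<mu> u) = of_nat (p ^ n) * h (u :: 'a)"
proof -
  have "chi p n (u - x) \<mu> = chi p n \<mu> u * cnj (chi p n \<mu> x)" for x \<mu>
    by (metis chi_commute chi_diff)
  then have "(\<Sum>\<mu>\<in>UNIV. fourier p n h \<mu> * chi p n \<mu> u) = (\<Sum>\<mu>\<in>UNIV. \<Sum>x\<in>UNIV. h x * chi p n (u - x) \<mu>)"
    unfolding fourier_def by (simp add: sum_distrib_left mult_ac)
  also have "\<dots> = (\<Sum>x\<in>UNIV. h x * (\<Sum>\<mu>\<in>UNIV. chi p n (u - x) \<mu>))"
    by (subst sum.swap) (simp add: sum_distrib_left)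
  also have "\<dots> = (\<Sum>x\<in>UNIV. if x = u then of_nat (p ^ n) * h x else 0)"
    by (intro sum.cong refl) (simp add: sum_chi)
  also have "\<dots> = of_nat (p ^ n) * h u"
    by simp
  finally show ?thesis .
qed

lemma walsh_eq_fourier:
  assumes "\<forall>x. f x \<in> prime_subfield"
  shows "walsh p n f \<mu> = fourier p n (\<lambda>x. zeta_pow p (f x)) (\<mu> :: 'a)"
  unfolding walsh_def fourier_def chi_def
  by (intro sum.cong refl zeta_pow_diff[OF prime_p CHAR_eq] assms[rule_format] tr_in_prime_subfield)

lemma plateaued_norm_fourier:
  assumes "\<forall>x. f x \<in> prime_subfield" and "plateaued p n s f"
    and "fourier p n (\<lambda>x. zeta_pow p (f x)) \<mu> \<noteq> 0"
  shows "(cmod (fourier p n (\<lambda>x. zeta_pow p (f x)) (\<mu> :: 'a)))\<^sup>2 = real (p ^ (n + s))"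
proof -
  have "cmod (walsh p n f \<mu>) = real p powr ((real n + real s) / 2)"
    using assms unfolding plateaued_def walsh_eq_fourier[OF assms(1)] by auto
  then show ?thesis
    using prime_gt_0_nat[OF prime_p] walsh_eq_fourier[OF assms(1)]
    by (simp add: power2_eq_square flip: powr_add powr_realpow)
qed

lemma fourier_convolution_cube:
  "fourier p n (\<lambda>u. \<Sum>t\<in>UNIV. \<Sum>y\<in>UNIV. F (u - t + y) * cnj (F y) * F t) \<mu>
     = fourier p n F \<mu> * fourier p n F \<mu> * cnj (fourier p n F (\<mu> :: 'a))"
proof -
  let ?c = "chi p n \<mu>" and ?W = "fourier p n F \<mu>"
  have shifted: "(\<Sum>u\<in>UNIV. F (u - t + y) * cnj (?c u)) = ?W * cnj (?c t) * ?c y" for t y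
  proof -
    have "(\<Sum>u\<in>UNIV. F (u - t + y) * cnj (?c u)) = (\<Sum>v\<in>UNIV. F (v + (t - y) - t + y) * cnj (?c (v + (t - y))))"
      by (rule sum_UNIV_shift[symmetric])
    also have "\<dots> = (\<Sum>v\<in>UNIV. F v * cnj (?c v) * (cnj (?c t) * ?c y))"
      by (simp add: chi_add chi_diff mult_ac)
    also have "\<dots> = (\<Sum>v\<in>UNIV. F v * cnj (?c v)) * (cnj (?c t) * ?c y)"
      by (rule sum_distrib_right[symmetric])
    finally show ?thesis
      by (simp add: fourier_def mult.assoc)
  qed
  have "fourier p n (\<lambda>u. \<Sum>t\<in>UNIV. \<Sum>y\<in>UNIV. F (u - t + y) * cnj (F y) * F t) \<mu>
      = (\<Sum>u\<in>UNIV. \<Sum>t\<in>UNIV. \<Sum>y\<in>UNIV. F (u - t + y) * cnj (?c u) * (cnj (F y) * F t))"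
    unfolding fourier_def by (simp add: sum_distrib_left sum_distrib_right mult_ac)
  also have "\<dots> = (\<Sum>t\<in>UNIV. \<Sum>y\<in>UNIV. \<Sum>u\<in>UNIV. F (u - t + y) * cnj (?c u) * (cnj (F y) * F t))"
    by (subst sum.swap, rule sum.cong[OF refl], rule sum.swap)
  also have "\<dots> = (\<Sum>t\<in>UNIV. \<Sum>y\<in>UNIV. (\<Sum>u\<in>UNIV. F (u - t + y) * cnj (?c u)) * (cnj (F y) * F t))"
    by (simp only: sum_distrib_right)
  also have "\<dots> = (\<Sum>t\<in>UNIV. \<Sum>y\<in>UNIV. (?W * cnj (?c t) * ?c y) * (cnj (F y) * F t))"
    by (simp only: shifted)
  also have "\<dots> = ?W * (\<Sum>t\<in>UNIV. F t * cnj (?c t)) * (\<Sum>y\<in>UNIV. cnj (F y * cnj (?c y)))"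
    by (simp add: sum_distrib_left sum_distrib_right mult_ac)
  also have "\<dots> = ?W * ?W * cnj ?W"
    by (simp add: fourier_def cnj_sum)
  finally show ?thesis .
qed

lemma hankel_triple_product:
  fixes F :: "'a \<Rightarrow> complex" and c :: real
  assumes norm_fourier: "\<And>\<mu>. fourier p n F \<mu> \<noteq> 0 \<Longrightarrow> (cmod (fourier p n F \<mu>))\<^sup>2 = c"
  defines "M \<equiv> \<chi> x y. F (x + y)"
  shows "M ** conj_transpose M ** M = c *\<^sub>R M"
proof -
  define G where "G u = (\<Sum>t\<in>UNIV. \<Sum>y\<in>UNIV. F (u - t + y) * cnj (F y) * F t)" for u
  have fourier_G: "fourier p n G \<mu> = c * fourier p n F \<mu>" for \<mu>
    using norm_fourier[of \<mu>] unfolding G_def fourier_convolution_cube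
    by (cases "fourier p n F \<mu> = 0") (auto simp: mult.assoc complex_mult_cnj cmod_power2)
  have G_eq: "G u = c * F u" for u
  proof -
    have "of_nat (p ^ n) * G u = (\<Sum>\<mu>\<in>UNIV. fourier p n G \<mu> * chi p n \<mu> u)"
      by (rule fourier_inversion[symmetric])
    also have "\<dots> = (\<Sum>\<mu>\<in>UNIV. c * (fourier p n F \<mu> * chi p n \<mu> u))"
      by (simp add: fourier_G mult.assoc)
    also have "\<dots> = of_nat (p ^ n) * (c * F u)"
      by (simp add: fourier_inversion flip: sum_distrib_left)
    finally show ?thesis
      using prime_gt_0_nat[OF prime_p] by simp
  qed
  have "(M ** conj_transpose M ** M) $ x $ w = G (x + w)" for x w
  proof -
    have row_shift: "(\<Sum>y\<in>UNIV. F (x + y) * cnj (F (z + y))) = (\<Sum>y\<in>UNIV. F (x - z + y) * cnj (F y))" for z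
    proof -
      have "(\<Sum>y\<in>UNIV. F (x + y) * cnj (F (z + y))) = (\<Sum>y\<in>UNIV. F (x + (y + - z)) * cnj (F (z + (y + - z))))"
        by (rule sum_UNIV_shift[symmetric])
      then show ?thesis
        by (simp add: algebra_simps)
    qed
    have "(M ** conj_transpose M ** M) $ x $ w
        = (\<Sum>z\<in>UNIV. (\<Sum>y\<in>UNIV. F (x + y) * cnj (F (z + y))) * F (z + w))"
      by (simp add: M_def matrix_matrix_mult_def conj_transpose_def)
    also have "\<dots> = (\<Sum>z\<in>UNIV. (\<Sum>y\<in>UNIV. F (x - z + y) * cnj (F y)) * F (z + w))"
      by (simp only: row_shift)
    also have "\<dots> = (\<Sum>t\<in>UNIV. (\<Sum>y\<in>UNIV. F (x - (t + - w) + y) * cnj (F y)) * F ((t + - w) + w))"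
      by (rule sum_UNIV_shift[symmetric])
    also have "\<dots> = G (x + w)"
      unfolding G_def by (intro sum.cong refl) (simp add: sum_distrib_left sum_distrib_right algebra_simps)
    finally show ?thesis .
  qed
  then show ?thesis
    by (simp add: vec_eq_iff G_eq M_def) (simp add: scaleR_conv_of_real)
qed

end

subsection \<open>Kronecker products\<close>

lemma sum_UNIV_prod:
  fixes f :: "'a::finite \<Rightarrow> complex" and g :: "'b::finite \<Rightarrow> complex"
  shows "(\<Sum>x\<in>UNIV. f (fst x) * g (snd x)) = (\<Sum>a\<in>UNIV. f a) * (\<Sum>b\<in>UNIV. g b)"
  by (simp add: sum_product sum.cartesian_product flip: UNIV_Times_UNIV) (simp add: case_prod_beta)

lemma kron_triple_product:
  fixes M :: "complex^'a::finite^'a" and N :: "complex^'b::finite^'b"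
  shows "kron M N ** conj_transpose (kron M N) ** kron M N
       = kron (M ** conj_transpose M ** M) (N ** conj_transpose N ** N)"
proof -
  have triple_entry: "(A ** conj_transpose A ** A) $ i $ j
      = (\<Sum>k\<in>UNIV. (\<Sum>l\<in>UNIV. A $ i $ l * cnj (A $ k $ l)) * A $ k $ j)"
    for A :: "complex^'c::finite^'c" and i j
    by (simp add: matrix_matrix_mult_def conj_transpose_def)
  have inner: "(\<Sum>l\<in>UNIV. kron M N $ i $ l * cnj (kron M N $ k $ l))
      = (\<Sum>l\<in>UNIV. M $ fst i $ l * cnj (M $ fst k $ l)) * (\<Sum>l\<in>UNIV. N $ snd i $ l * cnj (N $ snd k $ l))"
    for i k
    using sum_UNIV_prod[of "\<lambda>l. M $ fst i $ l * cnj (M $ fst k $ l)" "\<lambda>l. N $ snd i $ l * cnj (N $ snd k $ l)"]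
    by (simp add: kron_def mult_ac)
  have "(kron M N ** conj_transpose (kron M N) ** kron M N) $ i $ j
       = (M ** conj_transpose M ** M) $ fst i $ fst j * (N ** conj_transpose N ** N) $ snd i $ snd j" for i j
    unfolding triple_entry inner
    using sum_UNIV_prod[of "\<lambda>k. (\<Sum>l\<in>UNIV. M $ fst i $ l * cnj (M $ k $ l)) * M $ k $ fst j"
                           "\<lambda>k. (\<Sum>l\<in>UNIV. N $ snd i $ l * cnj (N $ k $ l)) * N $ k $ snd j"]
    by (simp add: kron_def mult_ac)
  then show ?thesis
    by (simp add: vec_eq_iff kron_def)
qed

lemma kron_scaleR: "kron (a *\<^sub>R M) (b *\<^sub>R N) = (a * b) *\<^sub>R kron M N"
  by (simp add: kron_def vec_eq_iff)

theorem mainTheorem8: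
  fixes p n m s1 s2 :: nat
    and f :: "'a::{field,finite} \<Rightarrow> 'a"
    and g :: "'b::{field,finite} \<Rightarrow> 'b"
  assumes "prime p"
    and "CARD('a) = p ^ n" and "CARD('b) = p ^ m"
    and "\<forall>x. f x \<in> prime_subfield" and "\<forall>a. g a \<in> prime_subfield"
    and "plateaued p n s1 f" and "plateaued p m s2 g"
  shows "let M = (\<chi> x y. zeta_pow p (f (x + y)));
             N = (\<chi> a b. zeta_pow p (g (a + b)));
             P = kron M N
         in P ** conj_transpose P ** P = of_nat (p ^ (n + m + s1 + s2)) *\<^sub>R P"
proof -
  let ?M = "\<chi> x y. zeta_pow p (f (x + y))"
  let ?N = "\<chi> a b. zeta_pow p (g (a + b))"
  have "?M ** conj_transpose ?M ** ?M = real (p ^ (n + s1)) *\<^sub>R ?M"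
    by (rule hankel_triple_product[OF assms(1,2) plateaued_norm_fourier[OF assms(1,2,4,6)]])
  moreover have "?N ** conj_transpose ?N ** ?N = real (p ^ (m + s2)) *\<^sub>R ?N"
    by (rule hankel_triple_product[OF assms(1,3) plateaued_norm_fourier[OF assms(1,3,5,7)]])
  ultimately show ?thesis
    by (simp add: kron_triple_product kron_scaleR power_add mult_ac)
qed

end
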